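(* Let $(t_n)_{n\ge1}$ be $\mathbb N$-valued random variables on a probability space, adapted to a filtration $(\mathcal F_n)_{n\ge0}$ (i.e. $t_n$ is $\mathcal F_n$-measurable), and let $p\colon\mathbb N\to[0,1]$ be such that $\mathbb P[t_n=T\mid\mathcal F_{n-1}]\le p(T)$ for all $n,T$, and $R:=\sum_{T=1}^\infty Tp(T)<\infty$. Then $\limsup_{n\to\infty}\frac1n\sum_{k=1}^nt_k\le R$ almost surely. *)

theory Defs
  imports "HOL-Probability.Probability"
begin

end

theory Submission
  imports Defs
begin

text \<open>
  Replace \<open>t\<^sub>k\<close> by its truncation \<open>s\<^sub>k = t\<^sub>k \<cdot> [t\<^sub>k \<le> k]\<close>. Since
  \<open>\<Sum>\<^sub>k P[t\<^sub>k > k] \<le> \<Sum>\<^sub>T T p(T) = R\<close>, Borel--Cantelli shows that almost surely only finitely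
  many terms change. Each \<open>s\<^sub>k\<close> is its compensator \<open>E[s\<^sub>k | F\<^sub>k\<^sub>-\<^sub>1] \<le> R\<close> plus a martingale
  difference; these differences are orthogonal with second moments at most
  \<open>V(k) = \<Sum>\<^sub>T\<^sub>\<le>\<^sub>k T\<^sup>2 p(T)\<close>. Along the geometric times \<open>n\<^sub>j = \<lfloor>a\<^sup>j\<rfloor>\<close> one has
  \<open>\<Sum>\<^sub>j V(n\<^sub>j)/n\<^sub>j < \<infinity>\<close>, so Chebyshev and Borel--Cantelli make the martingale part
  eventually smaller than \<open>\<epsilon> n\<^sub>j\<close>; since \<open>s\<^sub>k \<ge> 0\<close>, monotonicity of the partial sums
  interpolates between these times at the cost of a factor \<open>a\<close>. Let \<open>a \<rightarrow> 1\<close> and \<open>\<epsilon> \<rightarrow> 0\<close>.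
\<close>

definition floor_pow :: "real \<Rightarrow> nat \<Rightarrow> nat" where
  "floor_pow a j = nat \<lfloor>a ^ j\<rfloor>"

lemma le_floor_pow_iff: "0 \<le> a \<Longrightarrow> n \<le> floor_pow a j \<longleftrightarrow> real n \<le> a ^ j"
  unfolding floor_pow_def by (simp add: le_nat_iff le_floor_iff)

lemma floor_pow_le: "0 \<le> a \<Longrightarrow> real (floor_pow a j) \<le> a ^ j"
  using le_floor_pow_iff by blast

lemma floor_pow_ge_1: "1 \<le> a \<Longrightarrow> 1 \<le> floor_pow a j"
  by (simp add: le_floor_pow_iff one_le_power)

lemma power_le_2_floor_pow:
  assumes "1 \<le> a" shows "a ^ j \<le> 2 * real (floor_pow a j)"
proof -
  have "1 \<le> \<lfloor>a ^ j\<rfloor>" using assms by (simp add: one_le_power le_floor_iff)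
  then show ?thesis unfolding floor_pow_def by linarith
qed

lemma sum_inverse_powers_above_le:
  fixes a T :: real
  assumes a: "1 < a" and T: "0 < T"
  shows "(\<Sum>j<J. if T \<le> a ^ j then 1 / a ^ j else 0) \<le> a / (a - 1) / T"
proof -
  define h where "h j = a / (a - 1) * min (1 / T) (1 / a ^ j)" for j
  have "(if T \<le> a ^ j then 1 / a ^ j else 0) \<le> h j - h (Suc j)" for j
  proof (cases "T \<le> a ^ j")
    case True
    have "T \<le> a ^ Suc j" using a by (simp add: order_trans[OF True])
    have min_eq: "min (1 / T) (1 / a ^ i) = 1 / a ^ i" if "T \<le> a ^ i" for i
      using that T by (simp add: min_absorb2 frac_le)
    have "h j - h (Suc j) = a / (a - 1) * (1 / a ^ j - 1 / a ^ Suc j)"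
      unfolding h_def min_eq[OF True] min_eq[OF \<open>T \<le> a ^ Suc j\<close>] by (rule right_diff_distrib[symmetric])
    also have "\<dots> = 1 / a ^ j" using a by (simp add: field_simps)
    finally show ?thesis using True by simp
  next
    case False
    have "1 / a ^ Suc j \<le> 1 / a ^ j" using a by (simp add: divide_simps)
    then have "h (Suc j) \<le> h j" using a unfolding h_def
      by (intro mult_left_mono min.mono) auto
    then show ?thesis using False by simp
  qed
  then have "(\<Sum>j<J. if T \<le> a ^ j then 1 / a ^ j else 0) \<le> (\<Sum>j<J. h j - h (Suc j))"
    by (rule sum_mono)
  also have "\<dots> = h 0 - h J" by (rule sum_lessThan_telescope')
  also have "\<dots> \<le> a / (a - 1) * (1 / T)"
  proof -
    have "0 \<le> h J" using a T by (simp add: h_def)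
    moreover have "h 0 \<le> a / (a - 1) * (1 / T)"
      using a unfolding h_def by (intro mult_left_mono) auto
    ultimately show ?thesis by linarith
  qed
  finally show ?thesis by simp
qed

lemma sum_inverse_floor_pow_above_le:
  fixes a :: real
  assumes a: "1 < a" and T: "0 < T"
  shows "(\<Sum>j<J. if T \<le> floor_pow a j then 1 / real (floor_pow a j) else 0)
           \<le> 2 * (a / (a - 1)) / real T"
proof -
  have "(\<Sum>j<J. if T \<le> floor_pow a j then 1 / real (floor_pow a j) else 0)
      \<le> (\<Sum>j<J. 2 * (if real T \<le> a ^ j then 1 / a ^ j else 0))"
  proof (rule sum_mono)
    fix j
    have "1 / real (floor_pow a j) \<le> 2 / a ^ j"
      using floor_pow_ge_1[of a j] power_le_2_floor_pow[of a j] a by (simp add: divide_simps)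
    then show "(if T \<le> floor_pow a j then 1 / real (floor_pow a j) else 0)
        \<le> 2 * (if real T \<le> a ^ j then 1 / a ^ j else 0)"
      using le_floor_pow_iff[of a T j] a by auto
  qed
  also have "\<dots> \<le> 2 * (a / (a - 1) / real T)"
    unfolding sum_distrib_left[symmetric]
    by (rule mult_left_mono[OF sum_inverse_powers_above_le]) (use a T in auto)
  finally show ?thesis by simp
qed

lemma summable_floor_pow_truncated_second_moments:
  fixes p :: "nat \<Rightarrow> real" and a :: real
  assumes a: "1 < a" and p: "\<And>T. 0 \<le> p T" and summ: "summable (\<lambda>T. real T * p T)"
  shows "summable (\<lambda>j. (\<Sum>T\<le>floor_pow a j. real T ^ 2 * p T) / real (floor_pow a j))"
proof (rule summableI_nonneg_bounded)
  \<comment> \<open>Exchanging the sums, \<open>T\<close> contributes \<open>T\<^sup>2 p(T) \<Sum>\<^bsub>n\<^sub>j \<ge> T\<^esub> 1/n\<^sub>j \<le> c T p(T)\<close>.\<close>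
  define c where "c = 2 * (a / (a - 1))"
  define w where "w j T = (if T \<le> floor_pow a j then 1 / real (floor_pow a j) else 0)" for j T
  show "0 \<le> (\<Sum>T\<le>floor_pow a j. real T ^ 2 * p T) / real (floor_pow a j)" for j
    using p by (intro divide_nonneg_nonneg sum_nonneg) auto
  fix J
  define N where "N = (\<Sum>j<J. floor_pow a j)"
  have "(\<Sum>j<J. (\<Sum>T\<le>floor_pow a j. real T ^ 2 * p T) / real (floor_pow a j))
      = (\<Sum>j<J. \<Sum>T\<le>N. real T ^ 2 * p T * w j T)"
  proof (rule sum.cong[OF refl])
    fix j assume "j \<in> {..<J}"
    then have "floor_pow a j \<le> N" unfolding N_def by (intro member_le_sum) auto
    then have "{T \<in> {..N}. T \<le> floor_pow a j} = {..floor_pow a j}" by auto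
    then show "(\<Sum>T\<le>floor_pow a j. real T ^ 2 * p T) / real (floor_pow a j)
        = (\<Sum>T\<le>N. real T ^ 2 * p T * w j T)"
      by (simp add: w_def sum_divide_distrib sum.inter_filter[symmetric] if_distrib cong: if_cong)
  qed
  also have "\<dots> = (\<Sum>T\<le>N. real T ^ 2 * p T * (\<Sum>j<J. w j T))"
    by (subst sum.swap) (simp add: sum_distrib_left)
  also have "\<dots> \<le> (\<Sum>T\<le>N. c * (real T * p T))"
  proof (rule sum_mono)
    fix T
    show "real T ^ 2 * p T * (\<Sum>j<J. w j T) \<le> c * (real T * p T)"
    proof (cases "T = 0")
      case False
      then have "real T ^ 2 * p T * (\<Sum>j<J. w j T) \<le> real T ^ 2 * p T * (c / real T)"
        unfolding w_def c_def using p[of T]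
        by (intro mult_left_mono sum_inverse_floor_pow_above_le a) auto
      also have "\<dots> = c * (real T * p T)" using False by (simp add: power2_eq_square)
      finally show ?thesis .
    qed simp
  qed
  also have "\<dots> \<le> c * (\<Sum>T. real T * p T)"
    unfolding sum_distrib_left[symmetric] using a p
    by (intro mult_left_mono sum_le_suminf[OF summ]) (auto simp: c_def)
  finally show "(\<Sum>j<J. (\<Sum>T\<le>floor_pow a j. real T ^ 2 * p T) / real (floor_pow a j))
      \<le> c * (\<Sum>T. real T * p T)" .
qed

lemma summable_tail_sums:
  fixes p :: "nat \<Rightarrow> real"
  assumes p: "\<And>T. 0 \<le> p T" and summ: "summable (\<lambda>T. real T * p T)"
  shows "summable (\<lambda>T. if k < T then p T else 0)"
    and "summable (\<lambda>k. \<Sum>T. if k < T then p T else 0)"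
proof -
  have tail_le: "(if k < T then p T else 0) \<le> real T * p T" for k T
    using p[of T] mult_right_mono[of 1 "real T" "p T"] by auto
  show tail_summable: "summable (\<lambda>T. if k < T then p T else 0)" for k
    by (rule summable_comparison_test'[OF summ, of 0]) (use p tail_le in auto)
  show "summable (\<lambda>k. \<Sum>T. if k < T then p T else 0)"
  proof (rule summableI_nonneg_bounded)
    show "0 \<le> (\<Sum>T. if k < T then p T else 0)" for k
      using p by (intro suminf_nonneg tail_summable) auto
    fix K
    have "(\<Sum>k<K. \<Sum>T. if k < T then p T else 0) = (\<Sum>T. \<Sum>k<K. if k < T then p T else 0)"
      by (rule suminf_sum[symmetric]) (rule tail_summable)
    also have "\<dots> \<le> (\<Sum>T. real T * p T)"
    proof (rule suminf_le[OF _ summable_sum[OF tail_summable] summ])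
      fix T
      have "(\<Sum>k<K. if k < T then p T else 0) = real (card {k. k < K \<and> k < T}) * p T"
        by (simp add: sum.If_cases[of "{..<K}"] Int_def)
      also have "\<dots> \<le> real T * p T"
        using p[of T] card_mono[of "{..<T}" "{k. k < K \<and> k < T}"] by (intro mult_right_mono) auto
      finally show "(\<Sum>k<K. if k < T then p T else 0) \<le> real T * p T" .
    qed
    finally show "(\<Sum>k<K. \<Sum>T. if k < T then p T else 0) \<le> (\<Sum>T. real T * p T)" .
  qed
qed

lemma power_bracket:
  fixes a x :: real
  assumes a: "1 < a" and x: "1 \<le> x"
  obtains j where "a ^ j \<le> x" "x < a ^ Suc j"
proof -
  obtain i where "x < a ^ i" using real_arch_pow[OF a] by blast
  define L where "L = (LEAST i. x < a ^ i)"
  have L: "x < a ^ L" unfolding L_def by (rule LeastI) fact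
  moreover have "L \<noteq> 0" using L x by (cases "L = 0") auto
  then obtain j where j: "L = Suc j" by (cases L) auto
  moreover have "\<not> x < a ^ j" using not_less_Least[of j "\<lambda>i. x < a ^ i"] j unfolding L_def by simp
  ultimately show ?thesis using that[of j] by (simp add: not_less)
qed

lemma eventually_le_of_eventually_le_floor_pow:
  fixes a B :: real and S :: "nat \<Rightarrow> real"
  assumes a: "1 < a" and B: "0 \<le> B" and mono: "mono S"
    and ev: "eventually (\<lambda>j. S (floor_pow a j) \<le> B * real (floor_pow a j)) sequentially"
  shows "eventually (\<lambda>n. S n \<le> a * B * real n) sequentially"
proof -
  obtain J where J: "\<And>j. J \<le> j \<Longrightarrow> S (floor_pow a j) \<le> B * real (floor_pow a j)"
    using ev unfolding eventually_sequentially by blast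
  show ?thesis unfolding eventually_sequentially
  proof (intro exI allI impI)
    fix n assume n: "nat \<lceil>a ^ J\<rceil> + 1 \<le> n"
    then have "1 \<le> real n" by simp
    with a obtain j where j: "a ^ j \<le> real n" "real n < a ^ Suc j" by (rule power_bracket)
    have "a ^ J < a ^ Suc j" using n j by linarith
    then have "J < Suc j" using power_strict_increasing_iff[OF a] by blast
    then have Jj: "J \<le> Suc j" by simp
    have "n \<le> floor_pow a (Suc j)" using j a by (simp add: le_floor_pow_iff)
    then have "S n \<le> S (floor_pow a (Suc j))" by (rule monoD[OF mono])
    also have "\<dots> \<le> B * real (floor_pow a (Suc j))" by (rule J[OF Jj])
    also have "\<dots> \<le> B * (a * a ^ j)" using floor_pow_le[of a "Suc j"] a B by (intro mult_left_mono) auto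
    also have "\<dots> \<le> B * (a * real n)" using j a B by (intro mult_left_mono) auto
    finally show "S n \<le> a * B * real n" by (simp add: algebra_simps)
  qed
qed

lemma eventually_average_le:
  fixes u s :: "nat \<Rightarrow> real"
  assumes le: "eventually (\<lambda>k. u k \<le> s k) sequentially"
    and sums: "eventually (\<lambda>n. (\<Sum>k=1..n. s k) \<le> B * real n) sequentially"
    and e: "0 < e"
  shows "eventually (\<lambda>n. (\<Sum>k=1..n. u k) / real n \<le> B + e) sequentially"
proof -
  obtain N where N: "\<And>k. N \<le> k \<Longrightarrow> u k \<le> s k"
    using le unfolding eventually_sequentially by blast
  define C where "C = (\<Sum>k<N. \<bar>u k - s k\<bar>)"
  have sum_le: "(\<Sum>k=1..n. u k) \<le> (\<Sum>k=1..n. s k) + C" for n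
  proof -
    have "(\<Sum>k=1..n. u k - s k) \<le> (\<Sum>k=1..n. if k < N then \<bar>u k - s k\<bar> else 0)"
      using N by (intro sum_mono) (auto simp: not_less)
    also have "\<dots> = (\<Sum>k\<in>{1..n} \<inter> {..<N}. \<bar>u k - s k\<bar>)"
      by (simp add: sum.If_cases lessThan_def)
    also have "\<dots> \<le> C"
      unfolding C_def by (rule sum_mono2) auto
    finally show ?thesis by (simp add: sum_subtractf)
  qed
  have "eventually (\<lambda>n. C \<le> e * real n \<and> 1 \<le> n) sequentially"
  proof (rule eventually_conj)
    show "eventually (\<lambda>n. C \<le> e * real n) sequentially"
      using filterlim_real_sequentially[THEN filterlim_tendsto_pos_mult_at_top[OF tendsto_const e]]
      unfolding filterlim_at_top by auto
  qed (rule eventually_ge_at_top)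
  with sums show ?thesis
  proof eventually_elim
    case (elim n)
    then have "(\<Sum>k=1..n. u k) \<le> (B + e) * real n"
      using sum_le[of n] by (simp add: algebra_simps)
    then show ?case using elim by (simp add: divide_simps)
  qed
qed

lemma Limsup_le_of_eventually_le:
  fixes f :: "nat \<Rightarrow> real"
  assumes b: "b \<longlonglongrightarrow> 0" and ev: "\<And>m. eventually (\<lambda>n. f n \<le> c + b m) sequentially"
  shows "limsup (\<lambda>n. ereal (f n)) \<le> ereal c"
proof (rule ereal_le_epsilon2)
  fix eps :: real assume "0 < eps"
  then obtain m where "b m < eps"
    using b[THEN order_tendstoD(2), of eps] by (metis eventually_sequentially order_refl)
  have "limsup (\<lambda>n. ereal (f n)) \<le> ereal (c + b m)"
    by (rule Limsup_bounded) (use ev[of m] in \<open>auto elim!: eventually_mono\<close>)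
  also have "\<dots> \<le> ereal c + ereal eps" using \<open>b m < eps\<close> by simp
  finally show "limsup (\<lambda>n. ereal (f n)) \<le> ereal c + ereal eps" .
qed

lemma (in sigma_finite_subalgebra) AE_abs_real_cond_exp_le:
  assumes "integrable M g" and "AE x in M. \<bar>g x\<bar> \<le> C"
  shows "AE x in M. \<bar>real_cond_exp M F g x\<bar> \<le> C"
proof -
  have "AE x in M. real_cond_exp M F g x \<le> C"
    using assms by (intro real_cond_exp_le_c) auto
  moreover have "AE x in M. - C \<le> real_cond_exp M F g x"
    using assms by (intro real_cond_exp_ge_c) auto
  ultimately show ?thesis by eventually_elim auto
qed

context finite_measure_subalgebra
begin

lemma integral_mult_cond_centered_eq_0:
  assumes [measurable]: "f \<in> borel_measurable F" "g \<in> borel_measurable M"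
    and f: "AE x in M. \<bar>f x\<bar> \<le> B" and g: "AE x in M. \<bar>g x\<bar> \<le> C"
  shows "integrable M (\<lambda>x. f x * (g x - real_cond_exp M F g x))"
    and "(\<integral>x. f x * (g x - real_cond_exp M F g x) \<partial>M) = 0"
proof -
  have [measurable]: "f \<in> borel_measurable M" by (rule measurable_from_subalg[OF subalg]) simp
  have fg: "integrable M (\<lambda>x. f x * g x)"
  proof (rule integrable_const_bound[where B = "B * C"])
    show "AE x in M. norm (f x * g x) \<le> B * C"
      using f g by eventually_elim (auto simp: abs_mult intro: mult_mono')
  qed measurable
  note cond_exp = real_cond_exp_intg[OF fg, simplified]
  show "integrable M (\<lambda>x. f x * (g x - real_cond_exp M F g x))"
    using fg cond_exp(1) by (simp add: right_diff_distrib)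
  show "(\<integral>x. f x * (g x - real_cond_exp M F g x) \<partial>M) = 0"
    using fg cond_exp by (simp add: right_diff_distrib)
qed

lemma integral_square_cond_centered_le:
  assumes [measurable]: "g \<in> borel_measurable M" and g: "AE x in M. \<bar>g x\<bar> \<le> C"
  shows "integrable M (\<lambda>x. (g x - real_cond_exp M F g x)\<^sup>2)"
    and "(\<integral>x. (g x - real_cond_exp M F g x)\<^sup>2 \<partial>M) \<le> (\<integral>x. (g x)\<^sup>2 \<partial>M)"
proof -
  let ?c = "real_cond_exp M F g"
  have g_int: "integrable M g" using g by (intro integrable_const_bound[where B = C]) auto
  have c_bound: "AE x in M. \<bar>?c x\<bar> \<le> C" by (rule AE_abs_real_cond_exp_le[OF g_int g])
  have square_int: "integrable M (\<lambda>x. (h x)\<^sup>2)"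
    if [measurable]: "h \<in> borel_measurable M" and h: "AE x in M. \<bar>h x\<bar> \<le> C" for h
  proof (rule integrable_const_bound[where B = "C\<^sup>2"])
    show "AE x in M. norm ((h x)\<^sup>2) \<le> C\<^sup>2"
      using h by eventually_elim (use power_mono[OF _ abs_ge_zero, of _ C 2] in auto)
  qed measurable
  have gg: "integrable M (\<lambda>x. (g x)\<^sup>2)" by (rule square_int) (use g in auto)
  have cc: "integrable M (\<lambda>x. (?c x)\<^sup>2)" by (rule square_int[OF _ c_bound]) simp
  have cross: "integrable M (\<lambda>x. ?c x * (g x - ?c x))" "(\<integral>x. ?c x * (g x - ?c x) \<partial>M) = 0"
    by (rule integral_mult_cond_centered_eq_0[OF _ _ c_bound g]; simp)+
  have expand: "(g x - ?c x)\<^sup>2 = (g x)\<^sup>2 - (?c x)\<^sup>2 - 2 * (?c x * (g x - ?c x))" for x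
    by (simp add: power2_eq_square algebra_simps)
  show "integrable M (\<lambda>x. (g x - ?c x)\<^sup>2)"
    unfolding expand using gg cc cross by simp
  have "(\<integral>x. (g x - ?c x)\<^sup>2 \<partial>M) = (\<integral>x. (g x)\<^sup>2 \<partial>M) - (\<integral>x. (?c x)\<^sup>2 \<partial>M)"
    unfolding expand using gg cc cross by simp
  also have "\<dots> \<le> (\<integral>x. (g x)\<^sup>2 \<partial>M)" by simp
  finally show "(\<integral>x. (g x - ?c x)\<^sup>2 \<partial>M) \<le> (\<integral>x. (g x)\<^sup>2 \<partial>M)" .
qed

end

lemma integral_square_sum_orthogonal:
  fixes X :: "'i \<Rightarrow> 'a \<Rightarrow> real"
  assumes I: "finite I"
    and int: "\<And>k l. k \<in> I \<Longrightarrow> l \<in> I \<Longrightarrow> integrable M (\<lambda>x. X k x * X l x)"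
    and orth: "\<And>k l. k \<in> I \<Longrightarrow> l \<in> I \<Longrightarrow> k \<noteq> l \<Longrightarrow> (\<integral>x. X k x * X l x \<partial>M) = 0"
  shows "integrable M (\<lambda>x. (\<Sum>k\<in>I. X k x)\<^sup>2)"
    and "(\<integral>x. (\<Sum>k\<in>I. X k x)\<^sup>2 \<partial>M) = (\<Sum>k\<in>I. \<integral>x. (X k x)\<^sup>2 \<partial>M)"
proof -
  have expand: "(\<Sum>k\<in>I. X k x)\<^sup>2 = (\<Sum>k\<in>I. \<Sum>l\<in>I. X k x * X l x)" for x
    by (simp add: power2_eq_square sum_product)
  show "integrable M (\<lambda>x. (\<Sum>k\<in>I. X k x)\<^sup>2)"
    unfolding expand using int by auto
  have "(\<integral>x. (\<Sum>k\<in>I. X k x)\<^sup>2 \<partial>M) = (\<Sum>k\<in>I. \<Sum>l\<in>I. \<integral>x. X k x * X l x \<partial>M)"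
    unfolding expand using int by (simp add: Bochner_Integration.integral_sum integrable_sum)
  also have "\<dots> = (\<Sum>k\<in>I. \<Sum>l\<in>I. if k = l then \<integral>x. (X k x)\<^sup>2 \<partial>M else 0)"
    using orth by (intro sum.cong refl) (auto simp: power2_eq_square)
  also have "\<dots> = (\<Sum>k\<in>I. \<integral>x. (X k x)\<^sup>2 \<partial>M)"
    using I by (simp add: sum.delta)
  finally show "(\<integral>x. (\<Sum>k\<in>I. X k x)\<^sup>2 \<partial>M) = (\<Sum>k\<in>I. \<integral>x. (X k x)\<^sup>2 \<partial>M)" .
qed

locale conditionally_dominated = prob_space M for M :: "'a measure" +
  fixes F :: "nat \<Rightarrow> 'a measure" and t :: "nat \<Rightarrow> 'a \<Rightarrow> nat" and p :: "nat \<Rightarrow> real"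
  assumes subalg: "\<And>n. subalgebra M (F n)"
    and mono: "\<And>n. sets (F n) \<subseteq> sets (F (Suc n))"
    and adapted: "\<And>n. n \<ge> 1 \<Longrightarrow> t n \<in> measurable (F n) (count_space UNIV)"
    and p_range: "\<And>T. 0 \<le> p T \<and> p T \<le> 1"
    and cond: "\<And>n T. n \<ge> 1 \<Longrightarrow>
       AE x in M. real_cond_exp M (F (n - 1)) (indicator {y \<in> space M. t n y = T}) x \<le> p T"
    and summ: "summable (\<lambda>T. real T * p T)"
begin

definition R :: real where
  "R = (\<Sum>T. real T * p T)"

definition V :: "nat \<Rightarrow> real" where
  "V n = (\<Sum>T\<le>n. real T ^ 2 * p T)"

definition level :: "nat \<Rightarrow> nat \<Rightarrow> 'a set" where
  "level k T = {y \<in> space M. t k y = T}"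

text \<open>\<open>trunc k\<close> is \<open>t\<^sub>k \<cdot> [t\<^sub>k \<le> k]\<close>, written as a combination of indicators so that
  the conditional bounds on \<open>P[t\<^sub>k = T | F\<^sub>k\<^sub>-\<^sub>1]\<close> transfer to its compensator.\<close>

definition trunc :: "nat \<Rightarrow> 'a \<Rightarrow> real" where
  "trunc k x = (\<Sum>T\<le>k. real T * indicator (level k T) x)"

definition compensator :: "nat \<Rightarrow> 'a \<Rightarrow> real" where
  "compensator k = real_cond_exp M (F (k - 1)) (trunc k)"

definition mdiff :: "nat \<Rightarrow> 'a \<Rightarrow> real" where
  "mdiff k x = trunc k x - compensator k x"

definition mart :: "nat \<Rightarrow> 'a \<Rightarrow> real" where
  "mart n x = (\<Sum>k=1..n. mdiff k x)"

lemma finite_measure_subalgebra_F: "finite_measure_subalgebra M (F n)"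
  by unfold_locales (rule subalg)

lemma space_F [simp]: "space (F n) = space M"
  using subalg[of n] by (simp add: subalgebra_def)

lemma sets_F_mono: "k \<le> n \<Longrightarrow> sets (F k) \<subseteq> sets (F n)"
  by (rule lift_Suc_mono_le[of "\<lambda>n. sets (F n)"]) (use mono in auto)

lemma measurable_F_mono: "k \<le> n \<Longrightarrow> f \<in> measurable (F k) N \<Longrightarrow> f \<in> measurable (F n) N"
  by (rule measurable_from_subalg[of "F n" "F k"]) (auto simp: subalgebra_def sets_F_mono)

lemma measurable_F_M: "f \<in> measurable (F n) N \<Longrightarrow> f \<in> measurable M N"
  by (rule measurable_from_subalg[OF subalg])

lemma sets_level: "1 \<le> k \<Longrightarrow> level k T \<in> sets (F k)"
  using measurable_sets[OF adapted, of k "{T}"] by (simp add: level_def vimage_def Int_def conj_commute)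

lemma sets_level_M: "1 \<le> k \<Longrightarrow> level k T \<in> sets M"
  using sets_level subalg by (meson subalgebra_def subsetD)

lemma trunc_measurable: "1 \<le> k \<Longrightarrow> trunc k \<in> borel_measurable (F k)"
  unfolding trunc_def using sets_level by measurable

lemma trunc_measurable_M: "1 \<le> k \<Longrightarrow> trunc k \<in> borel_measurable M"
  using trunc_measurable measurable_F_M by blast

lemma trunc_eq: "x \<in> space M \<Longrightarrow> trunc k x = (if t k x \<le> k then real (t k x) else 0)"
  unfolding trunc_def level_def by (simp add: indicator_def if_distrib sum.delta cong: if_cong)

lemma square_trunc_eq: "x \<in> space M \<Longrightarrow> (trunc k x)\<^sup>2 = (\<Sum>T\<le>k. real T ^ 2 * indicator (level k T) x)"
  unfolding trunc_eq level_def by (simp add: indicator_def if_distrib sum.delta cong: if_cong)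

lemma trunc_nonneg: "x \<in> space M \<Longrightarrow> 0 \<le> trunc k x"
  by (simp add: trunc_eq)

lemma abs_trunc_le: "x \<in> space M \<Longrightarrow> \<bar>trunc k x\<bar> \<le> real k"
  by (simp add: trunc_eq)

lemma prob_level_le: assumes k: "1 \<le> k" shows "prob (level k T) \<le> p T"
proof -
  interpret finite_measure_subalgebra M "F (k - 1)" by (rule finite_measure_subalgebra_F)
  have ind: "integrable M (indicator (level k T) :: 'a \<Rightarrow> real)"
    using sets_level_M[OF k] by (simp add: emeasure_eq_measure)
  have "prob (level k T) = (\<integral>x. real_cond_exp M (F (k - 1)) (indicator (level k T)) x \<partial>M)"
    using real_cond_exp_int(2)[OF ind] sets_level_M[OF k] by simp
  also have "\<dots> \<le> (\<integral>x. p T \<partial>M)"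
    using real_cond_exp_int(1)[OF ind] cond[OF k, of T] by (intro integral_mono_AE) (auto simp: level_def)
  also have "\<dots> = p T" by (simp add: prob_space)
  finally show ?thesis .
qed

lemma partial_sum_le_R: "(\<Sum>T\<le>n. real T * p T) \<le> R"
  unfolding R_def using sum_le_suminf[OF summ, of "{..n}"] p_range by auto

lemma R_nonneg: "0 \<le> R"
  using partial_sum_le_R[of 0] by simp

lemma AE_compensator_le_R: assumes k: "1 \<le> k" shows "AE x in M. compensator k x \<le> R"
proof -
  interpret finite_measure_subalgebra M "F (k - 1)" by (rule finite_measure_subalgebra_F)
  let ?ce = "real_cond_exp M (F (k - 1))"
  have ind: "integrable M (indicator (level k T) :: 'a \<Rightarrow> real)" for T
    using sets_level_M[OF k] by (simp add: emeasure_eq_measure)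
  have "AE x in M. compensator k x = (\<Sum>T\<le>k. ?ce (\<lambda>x. real T * indicator (level k T) x) x)"
    unfolding compensator_def trunc_def using ind by (intro real_cond_exp_sum) simp
  moreover have "AE x in M. \<forall>T. ?ce (\<lambda>x. real T * indicator (level k T) x) x = real T * ?ce (indicator (level k T)) x"
    unfolding AE_all_countable using ind real_cond_exp_cmult by blast
  moreover have "AE x in M. \<forall>T. ?ce (indicator (level k T)) x \<le> p T"
    unfolding AE_all_countable using cond[OF k] by (simp add: level_def)
  ultimately show ?thesis
  proof eventually_elim
    case (elim x)
    then have "compensator k x \<le> (\<Sum>T\<le>k. real T * p T)"
      by (simp add: sum_mono mult_left_mono)
    then show ?case using partial_sum_le_R by (rule order_trans)
  qed
qed

lemma compensator_measurable: "compensator k \<in> borel_measurable (F (k - 1))"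
  unfolding compensator_def by (rule borel_measurable_cond_exp)

lemma mdiff_measurable: "1 \<le> k \<Longrightarrow> mdiff k \<in> borel_measurable (F k)"
  unfolding mdiff_def
  using trunc_measurable measurable_F_mono[OF _ compensator_measurable, of k] by measurable

lemma mdiff_measurable_M: "1 \<le> k \<Longrightarrow> mdiff k \<in> borel_measurable M"
  using mdiff_measurable measurable_F_M by blast

lemma AE_abs_mdiff_le: assumes k: "1 \<le> k" shows "AE x in M. \<bar>mdiff k x\<bar> \<le> 2 * real k"
proof -
  interpret finite_measure_subalgebra M "F (k - 1)" by (rule finite_measure_subalgebra_F)
  have "AE x in M. \<bar>compensator k x\<bar> \<le> real k"
    unfolding compensator_def using abs_trunc_le trunc_measurable_M[OF k]
    by (intro AE_abs_real_cond_exp_le integrable_const_bound[where B = "real k"]) auto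
  with AE_space show ?thesis
  proof eventually_elim
    case (elim x)
    then show ?case using abs_trunc_le[of x k] abs_triangle_ineq4 unfolding mdiff_def by fastforce
  qed
qed

lemma mdiff_orthogonal:
  assumes "1 \<le> k" "k < l"
  shows "integrable M (\<lambda>x. mdiff k x * mdiff l x)" and "(\<integral>x. mdiff k x * mdiff l x \<partial>M) = 0"
proof -
  interpret finite_measure_subalgebra M "F (l - 1)" by (rule finite_measure_subalgebra_F)
  have "mdiff k \<in> borel_measurable (F (l - 1))"
    using assms by (intro measurable_F_mono[OF _ mdiff_measurable]) auto
  moreover have "AE x in M. \<bar>trunc l x\<bar> \<le> real l" using abs_trunc_le by simp
  ultimately show "integrable M (\<lambda>x. mdiff k x * mdiff l x)" "(\<integral>x. mdiff k x * mdiff l x \<partial>M) = 0"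
    using integral_mult_cond_centered_eq_0[OF _ trunc_measurable_M AE_abs_mdiff_le] assms
    unfolding mdiff_def[of l] compensator_def by auto
qed

lemma integral_square_trunc_le: assumes k: "1 \<le> k" shows "(\<integral>x. (trunc k x)\<^sup>2 \<partial>M) \<le> V k"
proof -
  have ind: "integrable M (indicator (level k T) :: 'a \<Rightarrow> real)" for T
    using sets_level_M[OF k] by (simp add: emeasure_eq_measure)
  have "(\<integral>x. (trunc k x)\<^sup>2 \<partial>M) = (\<integral>x. (\<Sum>T\<le>k. real T ^ 2 * indicator (level k T) x) \<partial>M)"
    by (intro Bochner_Integration.integral_cong refl) (simp add: square_trunc_eq)
  also have "\<dots> = (\<Sum>T\<le>k. \<integral>x. real T ^ 2 * indicator (level k T) x \<partial>M)"
    using ind by (intro Bochner_Integration.integral_sum) auto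
  also have "\<dots> = (\<Sum>T\<le>k. real T ^ 2 * prob (level k T))"
    using sets_level_M[OF k] by simp
  also have "\<dots> \<le> V k"
    unfolding V_def using prob_level_le[OF k] by (intro sum_mono mult_left_mono) auto
  finally show ?thesis .
qed

lemma integral_square_mdiff_le:
  assumes k: "1 \<le> k"
  shows "integrable M (\<lambda>x. (mdiff k x)\<^sup>2)" and "(\<integral>x. (mdiff k x)\<^sup>2 \<partial>M) \<le> V k"
proof -
  interpret finite_measure_subalgebra M "F (k - 1)" by (rule finite_measure_subalgebra_F)
  note centered = integral_square_cond_centered_le[OF trunc_measurable_M[OF k], of k]
  show "integrable M (\<lambda>x. (mdiff k x)\<^sup>2)"
    using centered abs_trunc_le unfolding mdiff_def compensator_def by auto
  have "(\<integral>x. (mdiff k x)\<^sup>2 \<partial>M) \<le> (\<integral>x. (trunc k x)\<^sup>2 \<partial>M)"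
    using centered abs_trunc_le unfolding mdiff_def compensator_def by auto
  then show "(\<integral>x. (mdiff k x)\<^sup>2 \<partial>M) \<le> V k"
    using integral_square_trunc_le[OF k] by linarith
qed

lemma integral_square_mart_le: "(\<integral>x. (mart n x)\<^sup>2 \<partial>M) \<le> real n * V n"
  and integrable_square_mart: "integrable M (\<lambda>x. (mart n x)\<^sup>2)"
proof -
  have int: "integrable M (\<lambda>x. mdiff k x * mdiff l x)" if "k \<in> {1..n}" "l \<in> {1..n}" for k l
    using that mdiff_orthogonal(1)[of k l] mdiff_orthogonal(1)[of l k] integral_square_mdiff_le(1)[of k]
    by (cases k l rule: linorder_cases) (auto simp: power2_eq_square mult.commute)
  have orth: "(\<integral>x. mdiff k x * mdiff l x \<partial>M) = 0"
    if "k \<in> {1..n}" "l \<in> {1..n}" "k \<noteq> l" for k l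
    using that mdiff_orthogonal(2)[of k l] mdiff_orthogonal(2)[of l k]
    by (cases k l rule: linorder_cases) (auto simp: mult.commute)
  note sum_sq = integral_square_sum_orthogonal[of "{1..n}" M mdiff, OF _ int orth, folded mart_def]
  show "integrable M (\<lambda>x. (mart n x)\<^sup>2)" using sum_sq(1) unfolding mart_def by simp
  have "(\<integral>x. (mart n x)\<^sup>2 \<partial>M) = (\<Sum>k=1..n. \<integral>x. (mdiff k x)\<^sup>2 \<partial>M)"
    using sum_sq(2) unfolding mart_def by simp
  also have "\<dots> \<le> (\<Sum>k=1..n. V n)"
  proof (rule sum_mono)
    fix k assume "k \<in> {1..n}"
    moreover have "V k \<le> V n" if "k \<le> n"
      unfolding V_def using that p_range by (intro sum_mono2) auto
    ultimately show "(\<integral>x. (mdiff k x)\<^sup>2 \<partial>M) \<le> V n"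
      using integral_square_mdiff_le(2)[of k] by force
  qed
  finally show "(\<integral>x. (mart n x)\<^sup>2 \<partial>M) \<le> real n * V n" by simp
qed

lemma mart_measurable: "mart n \<in> borel_measurable M"
  unfolding mart_def using mdiff_measurable_M by (intro borel_measurable_sum) auto

lemma prob_mart_ge_le:
  assumes n: "1 \<le> n" and e: "0 < e"
  shows "prob {x \<in> space M. e * real n \<le> mart n x} \<le> V n / (e\<^sup>2 * real n)"
proof -
  have "{x \<in> space M. e * real n \<le> mart n x} \<subseteq> {x \<in> space M. (e * real n)\<^sup>2 \<le> (mart n x)\<^sup>2}"
    using e by (auto intro: power_mono)
  then have "prob {x \<in> space M. e * real n \<le> mart n x}
      \<le> prob {x \<in> space M. (e * real n)\<^sup>2 \<le> (mart n x)\<^sup>2}"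
    using mart_measurable by (intro finite_measure_mono) measurable
  also have "\<dots> \<le> (\<integral>x. (mart n x)\<^sup>2 \<partial>M) / (e * real n)\<^sup>2"
    using integrable_square_mart e n by (intro integral_Markov_inequality_measure[where A = "space M"]) auto
  also have "\<dots> \<le> real n * V n / (e * real n)\<^sup>2"
    by (intro divide_right_mono integral_square_mart_le) auto
  also have "\<dots> = V n / (e\<^sup>2 * real n)"
    using n by (simp add: power2_eq_square)
  finally show ?thesis .
qed

lemma AE_eventually_mart_floor_pow_less:
  assumes a: "1 < a" and e: "0 < e"
  shows "AE x in M. eventually (\<lambda>j. mart (floor_pow a j) x < e * real (floor_pow a j)) sequentially"
proof -
  define E where "E j = {x \<in> space M. e * real (floor_pow a j) \<le> mart (floor_pow a j) x}" for j
  have [measurable]: "E j \<in> sets M" for j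
    unfolding E_def using mart_measurable by measurable
  have summable_bound: "summable (\<lambda>j. V (floor_pow a j) / real (floor_pow a j) / e\<^sup>2)"
    unfolding V_def using a p_range summ
    by (intro summable_divide summable_floor_pow_truncated_second_moments) auto
  have prob_E_le: "prob (E j) \<le> V (floor_pow a j) / real (floor_pow a j) / e\<^sup>2" for j
    unfolding E_def using prob_mart_ge_le[OF floor_pow_ge_1 e, of a j] a
    by (simp add: divide_divide_eq_left mult.commute)
  have "summable (\<lambda>j. prob (E j))"
    by (rule summable_comparison_test'[OF summable_bound, where N = 0]) (use prob_E_le in auto)
  then have "AE x in M. eventually (\<lambda>j. x \<in> space M - E j) sequentially"
    by (intro borel_cantelli_AE1) (auto simp: emeasure_eq_measure)
  then show ?thesis
    by eventually_elim (auto elim!: eventually_mono simp: E_def)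
qed

lemma AE_eventually_le_trunc: "AE x in M. eventually (\<lambda>k. real (t k x) \<le> trunc k x) sequentially"
proof -
  define B where "B k = (\<Union>T. if k < T then level k T else {})" for k
  have [measurable]: "B k \<in> sets M" if "1 \<le> k" for k
    unfolding B_def using sets_level_M[OF that] by auto
  have "prob (B k) \<le> (\<Sum>T. if k < T then p T else 0)" if k: "1 \<le> k" for k
  proof -
    have prob_le: "prob (if k < T then level k T else {}) \<le> (if k < T then p T else 0)" for T
      using prob_level_le[OF k] by simp
    have summable: "summable (\<lambda>T. prob (if k < T then level k T else {}))"
      by (rule summable_comparison_test'[OF summable_tail_sums(1)[OF _ summ], of 0])
         (use p_range prob_level_le[OF k] in auto)
    have "prob (B k) \<le> (\<Sum>T. prob (if k < T then level k T else {}))"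
      unfolding B_def using sets_level_M[OF k] by (intro finite_measure_subadditive_countably summable) auto
    also have "\<dots> \<le> (\<Sum>T. if k < T then p T else 0)"
      using p_range prob_le by (intro suminf_le summable summable_tail_sums(1)[OF _ summ]) auto
    finally show ?thesis .
  qed
  \<comment> \<open>Shift the index: \<open>t 0\<close> need not be measurable, so \<open>B 0\<close> need not be an event.\<close>
  then have "summable (\<lambda>k. prob (B (Suc k)))"
    using p_range
    by (intro summable_comparison_test'[where N = 0,
          OF summable_ignore_initial_segment[OF summable_tail_sums(2)[OF _ summ], of 1]]) auto
  then have "AE x in M. eventually (\<lambda>k. x \<in> space M - B (Suc k)) sequentially"
    by (intro borel_cantelli_AE1) (auto simp: emeasure_eq_measure)
  then show ?thesis
  proof eventually_elim
    case (elim x)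
    then have "eventually (\<lambda>k. x \<in> space M - B k) sequentially"
      by (subst eventually_sequentially_Suc[symmetric])
    then show ?case
      by (rule eventually_mono) (auto simp: B_def level_def trunc_eq not_less)
  qed
qed

lemma AE_eventually_average_le:
  assumes a: "1 < a" and e: "0 < e"
  shows "AE x in M. eventually (\<lambda>n. (\<Sum>k=1..n. real (t k x)) / real n \<le> a * (R + e) + e) sequentially"
proof -
  have "AE x in M. \<forall>k. 1 \<le> k \<longrightarrow> compensator k x \<le> R"
    unfolding AE_all_countable using AE_compensator_le_R by auto
  with AE_eventually_le_trunc AE_eventually_mart_floor_pow_less[OF a e] AE_space show ?thesis
  proof eventually_elim
    case (elim x)
    define S where "S n = (\<Sum>k=1..n. trunc k x)" for n
    have "mono S"
      unfolding S_def mono_def using elim by (auto intro!: sum_mono2 trunc_nonneg)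
    have S_le: "S n \<le> mart n x + real n * R" for n
    proof -
      have "(\<Sum>k=1..n. compensator k x) \<le> (\<Sum>k=1..n. R)" using elim by (intro sum_mono) auto
      then show ?thesis by (simp add: S_def mart_def mdiff_def sum_subtractf)
    qed
    have "S n \<le> (R + e) * real n" if "mart n x < e * real n" for n
      using that S_le[of n] by (simp add: algebra_simps)
    with elim(2) have "eventually (\<lambda>j. S (floor_pow a j) \<le> (R + e) * real (floor_pow a j)) sequentially"
      by (rule eventually_mono)
    with a have "eventually (\<lambda>n. S n \<le> a * (R + e) * real n) sequentially"
      using R_nonneg e \<open>mono S\<close> by (intro eventually_le_of_eventually_le_floor_pow) auto
    then show ?case
      using eventually_average_le[OF elim(1) _ e] unfolding S_def by blast
  qed
qed

end

theorem proposition6p4: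
  fixes M :: "'a measure" and F :: "nat \<Rightarrow> 'a measure"
    and t :: "nat \<Rightarrow> 'a \<Rightarrow> nat" and p :: "nat \<Rightarrow> real"
  assumes "prob_space M"
    and subalg: "\<And>n. subalgebra M (F n)"
    and mono: "\<And>n. sets (F n) \<subseteq> sets (F (Suc n))"
    and adapted: "\<And>n. n \<ge> 1 \<Longrightarrow> t n \<in> measurable (F n) (count_space UNIV)"
    and p_range: "\<And>T. 0 \<le> p T \<and> p T \<le> 1"
    and cond: "\<And>n T. n \<ge> 1 \<Longrightarrow>
       AE x in M. real_cond_exp M (F (n - 1)) (indicator {y \<in> space M. t n y = T}) x \<le> p T"
    and summ: "summable (\<lambda>T. real T * p T)"
  shows "AE x in M. limsup (\<lambda>n. ereal ((\<Sum>k=1..n. real (t k x)) / real n))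
                      \<le> ereal (\<Sum>T. real T * p T)"
proof -
  interpret conditionally_dominated M F t p
    by (rule conditionally_dominated.intro[OF assms(1)], unfold_locales) (use assms in auto)
  define d where "d m = inverse (real (Suc m))" for m
  have d_pos: "0 < d m" for m by (simp add: d_def)
  have "d \<longlonglongrightarrow> 0"
    unfolding d_def by (rule LIMSEQ_inverse_real_of_nat)
  then have "(\<lambda>m. d m * (R + d m + 2)) \<longlonglongrightarrow> 0 * (R + 0 + 2)"
    by (intro tendsto_intros)
  then have slack: "(\<lambda>m. d m * (R + d m + 2)) \<longlonglongrightarrow> 0" by simp
  have "AE x in M. \<forall>m. eventually (\<lambda>n. (\<Sum>k=1..n. real (t k x)) / real n
      \<le> R + d m * (R + d m + 2)) sequentially"
    unfolding AE_all_countable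
    using AE_eventually_average_le[of "1 + d m" "d m" for m] d_pos by (simp add: algebra_simps)
  then show ?thesis
    unfolding R_def[symmetric] by eventually_elim (rule Limsup_le_of_eventually_le[OF slack], auto)
qed

end
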